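(* Let $p=p_1,\dots,p_m\in(\mathbb R^d)^m$ and $q=q_1,\dots,q_k\in(\mathbb R^d)^k$ with $\mathrm d_{dF}(p,q)\le1$ (with respect to the Euclidean metric). Let $T$ be an optimal traversal of $p$ and $q$ whose traversal graph $G_T$ has at most $k$ connected components, each of which is a star, and let $X_1,\dots,X_l\subseteq\mathbb R^d$ ($l\le k$) be the sets of points $\{p_i: (p\text{-vertex } i)\in K\}\cup\{q_j:(q\text{-vertex } j)\in K\}$ for the connected components $K$ of $G_T$. Let $\delta=4dk$ and let $z$ be uniform in $[0,\delta]$. Then \[ \Pr_z\big[\exists i\in\{1,\dots,l\}\ \exists x,y\in X_i:\ g_{\delta,z}(x)\ne g_{\delta,z}(y)\big]\le\frac12. \]
   Context: For $p\in(\mathbb R^d)^m$ and $q\in(\mathbb R^d)^k$, a traversal is a sequence of index pairs $(i_1,j_1),\dots,(i_t,j_t)$ with $(i_1,j_1)=(1,1)$, $(i_t,j_t)=(m,k)$, and for every $u<t$: $i_{u+1}-i_u\in\{0,1\}$, $j_{u+1}-j_u\in\{0,1\}$ and $(i_{u+1}-i_u)+(j_{u+1}-j_u)\ge1$; its cost is $\max_u\|p_{i_u}-q_{j_u}\|$, and $\mathrm d_{dF}(p,q)$ is the minimum cost over all traversals; a traversal is optimal if its cost equals $\mathrm d_{dF}(p,q)$. The traversal graph $G_T$ is the bipartite graph with vertex set $\{1,\dots,m\}\sqcup\{1,\dots,k\}$ (indices of vertices of $p$ and of $q$) and an edge between $p$-vertex $i$ and $q$-vertex $j$ for every pair $(i,j)\in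 T$. For $\delta>0$, $z\in[0,\delta]$, $g_{\delta,z}(x)=(\lfloor(x_1-z)/\delta\rfloor,\dots,\lfloor(x_d-z)/\delta\rfloor)$ for $x\in\mathbb R^d$. *)

theory Defs
  imports "HOL-Analysis.Analysis"
begin

text \<open>Curves are given as functions nat => real^'d, the vertex p_i being p i for 1 <= i <= m.
  The dimension d is CARD('d). Norm on real^'d is the Euclidean norm.\<close>

definition is_traversal :: "nat \<Rightarrow> nat \<Rightarrow> (nat \<times> nat) list \<Rightarrow> bool" where
  "is_traversal m k T \<longleftrightarrow> T \<noteq> [] \<and> hd T = (1, 1) \<and> last T = (m, k) \<and>
     (\<forall>u. Suc u < length T \<longrightarrow>
        (let (a, b) = T ! u; (c, e) = T ! Suc u in
          (c = a \<or> c = a + 1) \<and> (e = b \<or> e = b + 1) \<and> (c - a) + (e - b) \<ge> 1))"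

definition trav_cost :: "(nat \<Rightarrow> real^'d) \<Rightarrow> (nat \<Rightarrow> real^'d) \<Rightarrow> (nat \<times> nat) list \<Rightarrow> real" where
  "trav_cost p q T = Max ((\<lambda>(i, j). norm (p i - q j)) ` set T)"

definition dFd :: "(nat \<Rightarrow> real^'d) \<Rightarrow> nat \<Rightarrow> (nat \<Rightarrow> real^'d) \<Rightarrow> nat \<Rightarrow> real" where
  "dFd p m q k = Inf (trav_cost p q ` {T. is_traversal m k T})"

definition optimal_traversal ::
  "(nat \<Rightarrow> real^'d) \<Rightarrow> nat \<Rightarrow> (nat \<Rightarrow> real^'d) \<Rightarrow> nat \<Rightarrow> (nat \<times> nat) list \<Rightarrow> bool" where
  "optimal_traversal p m q k T \<longleftrightarrow> is_traversal m k T \<and> trav_cost p q T = dFd p m q k"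

text \<open>Traversal graph: p-vertex i is Inl i, q-vertex j is Inr j.\<close>

definition tg_vertices :: "nat \<Rightarrow> nat \<Rightarrow> (nat + nat) set" where
  "tg_vertices m k = Inl ` {1..m} \<union> Inr ` {1..k}"

definition tg_edge :: "(nat \<times> nat) list \<Rightarrow> nat + nat \<Rightarrow> nat + nat \<Rightarrow> bool" where
  "tg_edge T u v \<longleftrightarrow> (\<exists>(i, j) \<in> set T. (u = Inl i \<and> v = Inr j) \<or> (u = Inr j \<and> v = Inl i))"

definition tg_components :: "nat \<Rightarrow> nat \<Rightarrow> (nat \<times> nat) list \<Rightarrow> (nat + nat) set set" where
  "tg_components m k T = (\<lambda>u. {v \<in> tg_vertices m k. (tg_edge T)\<^sup>*\<^sup>* u v}) ` tg_vertices m k"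

definition is_star_component :: "(nat \<times> nat) list \<Rightarrow> (nat + nat) set \<Rightarrow> bool" where
  "is_star_component T K \<longleftrightarrow> (\<exists>c \<in> K. \<forall>u v. u \<in> K \<longrightarrow> tg_edge T u v \<longrightarrow> u = c \<or> v = c)"

definition vertex_point :: "(nat \<Rightarrow> real^'d) \<Rightarrow> (nat \<Rightarrow> real^'d) \<Rightarrow> nat + nat \<Rightarrow> real^'d" where
  "vertex_point p q v = (case v of Inl i \<Rightarrow> p i | Inr j \<Rightarrow> q j)"

definition grid_map :: "real \<Rightarrow> real \<Rightarrow> real^'d \<Rightarrow> int^'d" where
  "grid_map \<delta> z x = (\<chi> i. \<lfloor>(x $ i - z) / \<delta>\<rfloor>)"

end

theory Submission
  imports Defs "HOL-Probability.Probability_Measure"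
begin

text \<open>Each edge of an optimal traversal has length at most \<open>d\<^sub>d\<^sub>F(p, q) \<le> 1\<close>, so every point
  of a star component lies within distance 1 of the centre of the star. If two points of a component
  land in different grid cells, one of them is separated from the centre in some coordinate \<open>i\<close>,
  so the shifted grid \<open>z + \<delta>\<int>\<close> meets the interval of radius 1 around the \<open>i\<close>-th coordinate of
  the centre. For \<open>z\<close> uniform in \<open>[0, \<delta>]\<close> this happens with probability at most \<open>2/\<delta>\<close>, and a
  union bound over at most \<open>k\<close> components and \<open>d\<close> coordinates gives \<open>2dk/\<delta> = 1/2\<close>.\<close>

lemma is_traversal_step_mono:
  assumes "is_traversal m k T" "Suc u < length T"
  shows "fst (T ! u) \<le> fst (T ! Suc u) \<and> snd (T ! u) \<le> snd (T ! Suc u)"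
  using assms unfolding is_traversal_def
  by (cases "T ! u"; cases "T ! Suc u") (fastforce simp: Let_def)

lemma is_traversal_mono:
  assumes "is_traversal m k T" "u \<le> v" "v < length T"
  shows "fst (T ! u) \<le> fst (T ! v) \<and> snd (T ! u) \<le> snd (T ! v)"
  using assms(2,3)
proof (induction v rule: dec_induct)
  case (step n)
  then show ?case using is_traversal_step_mono[OF assms(1), of n] by auto
qed simp

lemma is_traversal_indices:
  assumes "is_traversal m k T" "(i, j) \<in> set T"
  shows "1 \<le> i \<and> i \<le> m \<and> 1 \<le> j \<and> j \<le> k"
proof -
  have first: "T ! 0 = (1, 1)" and final: "T ! (length T - 1) = (m, k)"
    using assms(1) unfolding is_traversal_def by (auto simp: hd_conv_nth last_conv_nth)
  obtain u where u: "u < length T" "T ! u = (i, j)"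
    using assms(2) by (metis in_set_conv_nth)
  show ?thesis
    using is_traversal_mono[OF assms(1), of 0 u] is_traversal_mono[OF assms(1), of u "length T - 1"]
      u first final by auto
qed

lemma is_traversal_imp_pos:
  assumes "is_traversal m k T"
  shows "1 \<le> k"
proof -
  have "(1, 1) \<in> set T"
    using assms hd_in_set unfolding is_traversal_def by fastforce
  then show ?thesis using is_traversal_indices[OF assms] by blast
qed

lemma trav_cost_ge:
  assumes "(i, j) \<in> set T"
  shows "norm (p i - q j) \<le> trav_cost p q T"
  unfolding trav_cost_def by (rule Max_ge) (use assms in force)+

lemma trav_cost_nonneg:
  assumes "T \<noteq> []"
  shows "0 \<le> trav_cost p q T"
proof -
  obtain i j where "(i, j) \<in> set T" using assms by (metis list.set_sel(1) surj_pair)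
  then show ?thesis using trav_cost_ge[of i j T p q] by (meson order_trans norm_ge_zero)
qed

lemma tg_edge_sym: "tg_edge T u v \<longleftrightarrow> tg_edge T v u"
  unfolding tg_edge_def by blast

lemma tg_edge_in_vertices:
  assumes "is_traversal m k T" "tg_edge T u v"
  shows "v \<in> tg_vertices m k"
  using assms is_traversal_indices[OF assms(1)]
  unfolding tg_edge_def tg_vertices_def by fastforce

lemma dist_vertex_point_le_trav_cost:
  assumes "tg_edge T u v"
  shows "norm (vertex_point p q u - vertex_point p q v) \<le> trav_cost p q T"
  using assms trav_cost_ge[of _ _ T p q]
  unfolding tg_edge_def vertex_point_def by (auto simp: norm_minus_commute)

lemma star_component_adjacent_centre:
  assumes T: "is_traversal m k T" and K: "K \<in> tg_components m k T"
    and c: "c \<in> K" and star: "\<forall>u v. u \<in> K \<longrightarrow> tg_edge T u v \<longrightarrow> u = c \<or> v = c"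
    and v: "v \<in> K"
  shows "v = c \<or> tg_edge T c v"
proof -
  obtain u0 where u0: "K = {v \<in> tg_vertices m k. (tg_edge T)\<^sup>*\<^sup>* u0 v}"
    using K unfolding tg_components_def by auto
  have converse: "(tg_edge T)\<inverse>\<inverse> = tg_edge T"
    using tg_edge_sym by (auto simp: fun_eq_iff)
  have u0c: "(tg_edge T)\<^sup>*\<^sup>* u0 c" using c u0 by auto
  then have "(tg_edge T)\<^sup>*\<^sup>* c u0"
    using rtranclp_converseI[OF u0c] converse by simp
  then have "(tg_edge T)\<^sup>*\<^sup>* c v" using v u0 by auto
  then show ?thesis
  proof (induction rule: rtranclp_induct)
    case (step w w')
    have "w \<in> K"
      using step.IH c tg_edge_in_vertices[OF T] u0 u0c step.hyps(1) by auto
    then show ?case using star step.hyps(2) by blast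
  qed simp
qed

lemma star_component_centre:
  assumes "is_traversal m k T" "K \<in> tg_components m k T" "is_star_component T K"
  shows "\<exists>c\<in>K. \<forall>v\<in>K. norm (vertex_point p q v - vertex_point p q c) \<le> trav_cost p q T"
proof -
  obtain c where c: "c \<in> K" "\<forall>u v. u \<in> K \<longrightarrow> tg_edge T u v \<longrightarrow> u = c \<or> v = c"
    using assms(3) unfolding is_star_component_def by auto
  have "norm (vertex_point p q v - vertex_point p q c) \<le> trav_cost p q T" if "v \<in> K" for v
    using star_component_adjacent_centre[OF assms(1,2) c \<open>v \<in> K\<close>]
      dist_vertex_point_le_trav_cost[of T c v p q] trav_cost_nonneg[of T p q] assms(1)
    unfolding is_traversal_def by (auto simp: norm_minus_commute)
  then show ?thesis using c(1) by blast
qed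

lemma floor_divide_neq_imp_grid_point:
  fixes s t z \<delta> :: real
  assumes "0 < \<delta>" "s \<le> t" "\<lfloor>(s - z) / \<delta>\<rfloor> \<noteq> \<lfloor>(t - z) / \<delta>\<rfloor>"
  shows "\<exists>n::int. s \<le> z + of_int n * \<delta> \<and> z + of_int n * \<delta> \<le> t"
proof
  let ?n = "\<lfloor>(t - z) / \<delta>\<rfloor>"
  have "\<lfloor>(s - z) / \<delta>\<rfloor> \<le> ?n"
    using assms(1,2) by (intro floor_mono divide_right_mono) auto
  then have "\<lfloor>(s - z) / \<delta>\<rfloor> < ?n" using assms(3) by simp
  then have "(s - z) / \<delta> < of_int ?n" by (simp add: floor_less_iff)
  then have "s - z < of_int ?n * \<delta>" using assms(1) by (simp only: pos_divide_less_eq)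
  moreover have "of_int ?n \<le> (t - z) / \<delta>" by (rule of_int_floor_le)
  then have "of_int ?n * \<delta> \<le> t - z" using assms(1) by (simp only: pos_le_divide_eq)
  ultimately show "s \<le> z + of_int ?n * \<delta> \<and> z + of_int ?n * \<delta> \<le> t" by linarith
qed

definition grid_hitting_shifts :: "real \<Rightarrow> real \<Rightarrow> real \<Rightarrow> real set" where
  "grid_hitting_shifts \<delta> a b = {z. \<exists>n::int. a \<le> z + of_int n * \<delta> \<and> z + of_int n * \<delta> \<le> b}"

lemma grid_hitting_shifts_sets [measurable]: "grid_hitting_shifts \<delta> a b \<in> sets borel"
  unfolding grid_hitting_shifts_def by measurable

lemma grid_map_neq_imp_grid_hitting_shifts:
  fixes x y :: "real^'d"
  assumes "0 < \<delta>" "grid_map \<delta> z x \<noteq> grid_map \<delta> z y" "norm (x - y) \<le> r"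
  shows "\<exists>i. z \<in> grid_hitting_shifts \<delta> (y $ i - r) (y $ i + r)"
proof -
  obtain i where i: "\<lfloor>(x $ i - z) / \<delta>\<rfloor> \<noteq> \<lfloor>(y $ i - z) / \<delta>\<rfloor>"
    using assms(2) unfolding grid_map_def by (auto simp: vec_eq_iff)
  have "\<bar>x $ i - y $ i\<bar> \<le> r"
    using component_le_norm_cart[of "x - y" i] assms(3) by simp
  moreover obtain n :: int
    where "min (x $ i) (y $ i) \<le> z + n * \<delta>" "z + n * \<delta> \<le> max (x $ i) (y $ i)"
  proof (cases "x $ i \<le> y $ i")
    case True
    then show ?thesis using that floor_divide_neq_imp_grid_point[OF assms(1) True i] by auto
  next
    case False
    then show ?thesis
      using that floor_divide_neq_imp_grid_point[OF assms(1), of "y $ i" "x $ i" z] i by auto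
  qed
  ultimately have "y $ i - r \<le> z + n * \<delta> \<and> z + n * \<delta> \<le> y $ i + r"
    by (auto simp: abs_le_iff min_def max_def split: if_splits)
  then show ?thesis unfolding grid_hitting_shifts_def by blast
qed

lemma grid_map_neq_near_centre:
  fixes x y c :: "real^'d"
  assumes "0 < \<delta>" "grid_map \<delta> z x \<noteq> grid_map \<delta> z y"
    and "norm (x - c) \<le> r" "norm (y - c) \<le> r"
  shows "\<exists>i. z \<in> grid_hitting_shifts \<delta> (c $ i - r) (c $ i + r)"
proof (cases "grid_map \<delta> z x = grid_map \<delta> z c")
  case True
  then show ?thesis
    using grid_map_neq_imp_grid_hitting_shifts[OF assms(1) _ assms(4)] assms(2) by simp
next
  case False
  then show ?thesis using grid_map_neq_imp_grid_hitting_shifts[OF assms(1) _ assms(3)] by blast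
qed

text \<open>Modulo \<open>\<delta>\<close>, the shifts hitting \<open>[a, b]\<close> form an arc of length \<open>b - a\<close> ending at the
  residue \<open>r\<close> of \<open>b\<close>, which may wrap around \<open>0\<close>.\<close>

lemma grid_hitting_shifts_subset:
  fixes a b \<delta> :: real
  assumes "0 \<le> b - a" "b - a < \<delta>"
  defines "r \<equiv> \<delta> * frac (b / \<delta>)"
  shows "{0..\<delta>} \<inter> grid_hitting_shifts \<delta> a b \<subseteq> {max 0 (r - (b - a))..r} \<union> {r + \<delta> - (b - a)..\<delta>}"
proof
  fix z assume "z \<in> {0..\<delta>} \<inter> grid_hitting_shifts \<delta> a b"
  then obtain n :: int where z: "0 \<le> z" "z \<le> \<delta>" and n: "a \<le> z + n * \<delta>" "z + n * \<delta> \<le> b"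
    unfolding grid_hitting_shifts_def by auto
  have \<delta>: "0 < \<delta>" using assms(1,2) by linarith
  have r: "0 \<le> r" "r < \<delta>"
    using \<delta> frac_lt_1[of "b / \<delta>"] by (simp_all add: r_def frac_ge_0)
  define j where "j = n - \<lfloor>b / \<delta>\<rfloor>"
  have "r - z = (b - z - n * \<delta>) + j * \<delta>"
    using \<delta> unfolding r_def j_def frac_def by (simp add: algebra_simps)
  then have lo: "j * \<delta> \<le> r - z" and hi: "r - z \<le> j * \<delta> + (b - a)"
    using n by linarith+
  have "j * \<delta> < 1 * \<delta>" using lo r z by linarith
  then have "real_of_int j < 1" by (rule mult_right_less_imp_less) (use \<delta> in simp)
  moreover have "-2 * \<delta> < j * \<delta>" using hi r z assms(2) by linarith
  then have "-2 < real_of_int j" by (rule mult_right_less_imp_less) (use \<delta> in simp)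
  ultimately have "j = 0 \<or> j = -1" by linarith
  then show "z \<in> {max 0 (r - (b - a))..r} \<union> {r + \<delta> - (b - a)..\<delta>}"
    using lo hi z by auto
qed

lemma measure_grid_hitting_shifts_le:
  fixes a b \<delta> :: real
  assumes "0 \<le> b - a" "b - a < \<delta>"
  shows "measure (uniform_measure lborel {0..\<delta>}) (grid_hitting_shifts \<delta> a b) \<le> (b - a) / \<delta>"
proof -
  define r where "r = \<delta> * frac (b / \<delta>)"
  let ?w = "b - a" and ?H = "{0..\<delta>} \<inter> grid_hitting_shifts \<delta> a b"
  have \<delta>: "0 < \<delta>" using assms by linarith
  have "0 \<le> r" using \<delta> by (simp add: r_def frac_ge_0)
  have "measure lborel ?H \<le> ?w"
  proof (cases "?w < r")
    case True
    then have "?H \<subseteq> {r - ?w..r}"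
      using grid_hitting_shifts_subset[OF assms] by (fastforce simp: r_def subset_iff)
    then have "measure lborel ?H \<le> measure lborel {r - ?w..r}"
      by (intro measure_mono_fmeasurable) (auto intro: fmeasurable_compact)
    then show ?thesis using assms(1) by simp
  next
    case False
    then have "?H \<subseteq> {0..r} \<union> {r + \<delta> - ?w..\<delta>}"
      using grid_hitting_shifts_subset[OF assms] by (simp add: r_def)
    then have "measure lborel ?H \<le> measure lborel ({0..r} \<union> {r + \<delta> - ?w..\<delta>})"
      by (intro measure_mono_fmeasurable) (auto intro: fmeasurable_compact)
    also have "\<dots> \<le> measure lborel {0..r} + measure lborel {r + \<delta> - ?w..\<delta>}"
      by (rule measure_Un_le) auto
    also have "\<dots> = ?w" using False \<open>0 \<le> r\<close> by simp
    finally show ?thesis .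
  qed
  moreover have "measure (uniform_measure lborel {0..\<delta>}) (grid_hitting_shifts \<delta> a b)
      = measure lborel ?H / \<delta>"
    using \<delta> by (subst measure_uniform_measure) auto
  ultimately show ?thesis using \<delta> by (simp add: divide_right_mono)
qed

lemma measure_grid_hitting_shifts_cover_le:
  fixes c :: "'a \<Rightarrow> real^'d"
  assumes "finite A" "0 \<le> r" "2 * r < \<delta>"
    and "B \<subseteq> (\<Union>a\<in>A. \<Union>i. grid_hitting_shifts \<delta> (c a $ i - r) (c a $ i + r))"
  shows "measure (uniform_measure lborel {0..\<delta>}) B \<le> real (card A) * real CARD('d) * (2 * r) / \<delta>"
proof -
  let ?M = "uniform_measure lborel {0..\<delta>}"
  let ?H = "\<lambda>a i. grid_hitting_shifts \<delta> (c a $ i - r) (c a $ i + r)"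
  have sets: "?H a i \<in> sets ?M" for a i by simp
  interpret M: prob_space ?M using assms(2,3) by (intro prob_space_uniform_measure) auto
  have "measure ?M B \<le> measure ?M (\<Union>a\<in>A. \<Union>i. ?H a i)"
    using assms(1,4) sets by (intro M.finite_measure_mono) auto
  also have "\<dots> \<le> (\<Sum>a\<in>A. measure ?M (\<Union>i. ?H a i))"
    using assms(1) sets by (intro measure_UNION_le) auto
  also have "\<dots> \<le> (\<Sum>a\<in>A. \<Sum>i\<in>UNIV. measure ?M (?H a i))"
    using sets by (intro sum_mono measure_UNION_le) auto
  also have "\<dots> \<le> (\<Sum>a\<in>A. \<Sum>i\<in>(UNIV :: 'd set). 2 * r / \<delta>)"
  proof (intro sum_mono)
    fix a i
    have "measure ?M (?H a i) \<le> ((c a $ i + r) - (c a $ i - r)) / \<delta>"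
      by (rule measure_grid_hitting_shifts_le) (use assms(2,3) in auto)
    then show "measure ?M (?H a i) \<le> 2 * r / \<delta>" by simp
  qed
  also have "\<dots> = real (card A) * real CARD('d) * (2 * r) / \<delta>" by simp
  finally show ?thesis .
qed

theorem mainTheorem12:
  fixes p q :: "nat \<Rightarrow> real^'d" and m k :: nat and T :: "(nat \<times> nat) list" and \<delta> :: real
  assumes "dFd p m q k \<le> 1"
    and "optimal_traversal p m q k T"
    and "card (tg_components m k T) \<le> k"
    and "\<forall>K \<in> tg_components m k T. is_star_component T K"
    and "\<delta> = 4 * real CARD('d) * real k"
  shows "measure (uniform_measure lborel {0..\<delta>})
           {z. \<exists>K \<in> tg_components m k T. \<exists>x \<in> vertex_point p q ` K. \<exists>y \<in> vertex_point p q ` K.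
                 grid_map \<delta> z x \<noteq> grid_map \<delta> z y} \<le> 1 / 2"
proof -
  let ?C = "tg_components m k T"
  have T: "is_traversal m k T" and cost: "trav_cost p q T \<le> 1"
    using assms(1,2) unfolding optimal_traversal_def by auto
  have "1 \<le> real k" "1 \<le> real CARD('d)"
    using is_traversal_imp_pos[OF T] by auto
  then have \<delta>: "4 \<le> \<delta>" using assms(5) mult_mono[of 1 "real CARD('d)" 1 "real k"] by simp
  have "\<forall>K\<in>?C. \<exists>c. \<forall>v\<in>K. norm (vertex_point p q v - c) \<le> 1"
    using star_component_centre[OF T] assms(4) cost by (meson order_trans)
  then obtain c where c: "\<forall>K\<in>?C. \<forall>v\<in>K. norm (vertex_point p q v - c K) \<le> 1"
    using bchoice by metis
  have "{z. \<exists>K \<in> ?C. \<exists>x \<in> vertex_point p q ` K. \<exists>y \<in> vertex_point p q ` K.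
                 grid_map \<delta> z x \<noteq> grid_map \<delta> z y}
        \<subseteq> (\<Union>K\<in>?C. \<Union>i. grid_hitting_shifts \<delta> (c K $ i - 1) (c K $ i + 1))"
  proof safe
    fix z K u v
    assume K: "K \<in> ?C" "u \<in> K" "v \<in> K"
      and neq: "grid_map \<delta> z (vertex_point p q u) \<noteq> grid_map \<delta> z (vertex_point p q v)"
    obtain i where "z \<in> grid_hitting_shifts \<delta> (c K $ i - 1) (c K $ i + 1)"
      using grid_map_neq_near_centre[OF _ neq] c K \<delta> by fastforce
    then show "z \<in> (\<Union>K\<in>?C. \<Union>i. grid_hitting_shifts \<delta> (c K $ i - 1) (c K $ i + 1))"
      using K(1) by blast
  qed
  moreover have "finite ?C" unfolding tg_components_def tg_vertices_def by simp
  ultimately have "measure (uniform_measure lborel {0..\<delta>})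
           {z. \<exists>K \<in> ?C. \<exists>x \<in> vertex_point p q ` K. \<exists>y \<in> vertex_point p q ` K.
                 grid_map \<delta> z x \<noteq> grid_map \<delta> z y} \<le> real (card ?C) * real CARD('d) * (2 * 1) / \<delta>"
    using \<delta> by (intro measure_grid_hitting_shifts_cover_le) auto
  also have "\<dots> \<le> 1 / 2"
  proof -
    have "real (card ?C) * (4 * real CARD('d)) \<le> real k * (4 * real CARD('d))"
      using assms(3) by (intro mult_right_mono) auto
    then have "real (card ?C) * real CARD('d) * (2 * 1) \<le> 1 / 2 * \<delta>"
      using assms(5) by (simp add: algebra_simps)
    moreover have "0 < \<delta>" using \<delta> by simp
    ultimately show ?thesis by (simp only: pos_divide_le_eq)
  qed
  finally show ?thesis .
qed

end
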